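(* Let $p_1,p_2\in(0,1]$, $c_1,c_2\ge0$, $\beta<1$, $\delta_1,\delta_2\in(0,1)$. Define $R=\frac12$, $T_i=p_i+(1-p_i)\frac12-c_i$ for $i=1,2$, $S_1=(1-p_2)\frac12$, $S_2=(1-p_1)\frac12$, $Q_1=p_1p_2\frac12\beta+p_1(1-p_2)+(1-p_1)(1-p_2)\frac12-c_1$, $Q_2=p_1p_2\frac12\beta+p_2(1-p_1)+(1-p_1)(1-p_2)\frac12-c_2$. (Grim Trigger) $\frac{R}{1-\delta_i}\ge T_i+\frac{\delta_iQ_i}{1-\delta_i}$ for both $i=1,2$ if and only if \[\delta_1\ge\frac{p_1-2c_1}{(1-\beta)p_1p_2+p_2}\quad\text{and}\quad\delta_2\ge\frac{p_2-2c_2}{(1-\beta)p_1p_2+p_1}.\] (Tit-for-Tat) $\frac{R}{1-\delta_i}\ge T_i+\delta_iS_i+\frac{\delta_i^2}{1-\delta_i}R$ for both $i=1,2$ if and only if \[\delta_1\ge\frac{p_1-2c_1}{p_2}\quad\text{and}\quad\delta_2\ge\frac{p_2-2c_2}{p_1}.\]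
   Context: Model: two content providers in an infinitely repeated game choose each period to cooperate or attack (ranking manipulation). Player $i$'s attack succeeds with probability $p_i$ and costs $c_i$; $\beta$ is the market degradation factor when both attacks succeed; $\delta_i$ is player $i$'s discount factor. $R,T_i,S_i,Q_i$ are player $i$'s stage payoffs for mutual cooperation, lone attack, being attacked while cooperating, and mutual attack. Cooperation is sustainable when each player weakly prefers perpetual cooperation to deviating under the trigger strategy (grim trigger: permanent mutual defection after a deviation; Tit-for-Tat: one round of retaliation then cooperation). *)

theory Defs
  imports Complex_Main
begin

definition R_pay :: real where "R_pay = 1/2"

definition T1 :: "real \<Rightarrow> real \<Rightarrow> real" where
  "T1 p1 c1 = p1 + (1 - p1) * (1/2) - c1"
definition T2 :: "real \<Rightarrow> real \<Rightarrow> real" where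
  "T2 p2 c2 = p2 + (1 - p2) * (1/2) - c2"
definition S1 :: "real \<Rightarrow> real" where
  "S1 p2 = (1 - p2) * (1/2)"
definition S2 :: "real \<Rightarrow> real" where
  "S2 p1 = (1 - p1) * (1/2)"
definition Q1 :: "real \<Rightarrow> real \<Rightarrow> real \<Rightarrow> real \<Rightarrow> real" where
  "Q1 p1 p2 \<beta> c1 = p1 * p2 * (1/2) * \<beta> + p1 * (1 - p2) + (1 - p1) * (1 - p2) * (1/2) - c1"
definition Q2 :: "real \<Rightarrow> real \<Rightarrow> real \<Rightarrow> real \<Rightarrow> real" where
  "Q2 p1 p2 \<beta> c2 = p1 * p2 * (1/2) * \<beta> + p2 * (1 - p1) + (1 - p1) * (1 - p2) * (1/2) - c2"

end

(* Multiplying a sustainability condition by 1 - \<delta> > 0 turns it into a condition that is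
   affine in \<delta> (grim trigger) or, after factoring out 1 - \<delta>, again affine in \<delta> (tit-for-tat).
   Solving for \<delta> gives the thresholds; player 2 is player 1 with the roles of p1, p2 swapped. *)
theory Submission
  imports Defs
begin

lemma discounted_le_iff:
  fixes a b x d :: real
  assumes "d < 1"
  shows "b + x / (1 - d) \<le> a / (1 - d) \<longleftrightarrow> (1 - d) * b + x \<le> a"
proof -
  have "b + x / (1 - d) = ((1 - d) * b + x) / (1 - d)"
    using assms by (simp add: field_simps)
  then show ?thesis
    using assms by (simp add: divide_le_cancel)
qed

lemma T2_eq_T1: "T2 p c = T1 p c"
  by (simp add: T1_def T2_def)

lemma S2_eq_S1: "S2 p = S1 p"
  by (simp add: S1_def S2_def)

lemma Q2_eq_Q1_swap: "Q2 p1 p2 \<beta> c = Q1 p2 p1 \<beta> c"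
  by (simp add: Q1_def Q2_def algebra_simps)

lemma grim_trigger_player1_iff:
  fixes p1 p2 c1 \<beta> d :: real
  assumes "0 \<le> p1" "0 < p2" "\<beta> \<le> 1" "d < 1"
  shows "R_pay / (1 - d) \<ge> T1 p1 c1 + d * Q1 p1 p2 \<beta> c1 / (1 - d) \<longleftrightarrow>
         d \<ge> (p1 - 2 * c1) / ((1 - \<beta>) * p1 * p2 + p2)"
proof -
  have pos: "(1 - \<beta>) * p1 * p2 + p2 > 0"
    using assms by (simp add: add_nonneg_pos)
  have "(1 - d) * T1 p1 c1 + d * Q1 p1 p2 \<beta> c1
        = R_pay + ((p1 - 2 * c1) - d * ((1 - \<beta>) * p1 * p2 + p2)) / 2"
    by (simp add: R_pay_def T1_def Q1_def field_simps)
  then show ?thesis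
    using assms(4) pos by (simp add: discounted_le_iff pos_divide_le_eq mult.commute)
qed

lemma tit_for_tat_player1_iff:
  fixes p1 p2 c1 d :: real
  assumes "0 < p2" "d < 1"
  shows "R_pay / (1 - d) \<ge> T1 p1 c1 + d * S1 p2 + d^2 / (1 - d) * R_pay \<longleftrightarrow>
         d \<ge> (p1 - 2 * c1) / p2"
proof -
  have "(1 - d) * (T1 p1 c1 + d * S1 p2) + d^2 * R_pay
        = R_pay + (1 - d) * ((p1 - 2 * c1) - d * p2) / 2"
    by (simp add: R_pay_def T1_def S1_def field_simps power2_eq_square)
  moreover have "(1 - d) * ((p1 - 2 * c1) - d * p2) \<le> 0 \<longleftrightarrow> p1 - 2 * c1 \<le> d * p2"
    using assms(2) by (simp add: mult_le_0_iff)
  ultimately show ?thesis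
    using assms discounted_le_iff[of d "T1 p1 c1 + d * S1 p2" "d^2 * R_pay" R_pay]
    by (simp add: pos_divide_le_eq mult.commute)
qed

lemma grim_trigger_player2_iff:
  fixes p1 p2 c2 \<beta> d :: real
  assumes "0 < p1" "0 \<le> p2" "\<beta> \<le> 1" "d < 1"
  shows "R_pay / (1 - d) \<ge> T2 p2 c2 + d * Q2 p1 p2 \<beta> c2 / (1 - d) \<longleftrightarrow>
         d \<ge> (p2 - 2 * c2) / ((1 - \<beta>) * p1 * p2 + p1)"
  using grim_trigger_player1_iff[of p2 p1 \<beta> d c2] assms
  by (simp add: T2_eq_T1 Q2_eq_Q1_swap mult.commute mult.left_commute)

lemma tit_for_tat_player2_iff:
  fixes p1 p2 c2 d :: real
  assumes "0 < p1" "d < 1"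
  shows "R_pay / (1 - d) \<ge> T2 p2 c2 + d * S2 p1 + d^2 / (1 - d) * R_pay \<longleftrightarrow>
         d \<ge> (p2 - 2 * c2) / p1"
  using tit_for_tat_player1_iff[of p1 d p2 c2] assms
  by (simp add: T2_eq_T1 S2_eq_S1)

theorem theorem10:
  fixes p1 p2 c1 c2 \<beta> \<delta>1 \<delta>2 :: real
  assumes "0 < p1" "p1 \<le> 1" "0 < p2" "p2 \<le> 1"
    and "c1 \<ge> 0" "c2 \<ge> 0" "\<beta> < 1"
    and "0 < \<delta>1" "\<delta>1 < 1" "0 < \<delta>2" "\<delta>2 < 1"
  shows "((R_pay / (1 - \<delta>1) \<ge> T1 p1 c1 + \<delta>1 * Q1 p1 p2 \<beta> c1 / (1 - \<delta>1) \<and>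
           R_pay / (1 - \<delta>2) \<ge> T2 p2 c2 + \<delta>2 * Q2 p1 p2 \<beta> c2 / (1 - \<delta>2))
          \<longleftrightarrow>
          (\<delta>1 \<ge> (p1 - 2 * c1) / ((1 - \<beta>) * p1 * p2 + p2) \<and>
           \<delta>2 \<ge> (p2 - 2 * c2) / ((1 - \<beta>) * p1 * p2 + p1)))
      \<and>
         ((R_pay / (1 - \<delta>1) \<ge> T1 p1 c1 + \<delta>1 * S1 p2 + \<delta>1^2 / (1 - \<delta>1) * R_pay \<and>
           R_pay / (1 - \<delta>2) \<ge> T2 p2 c2 + \<delta>2 * S2 p1 + \<delta>2^2 / (1 - \<delta>2) * R_pay)
          \<longleftrightarrow>
          (\<delta>1 \<ge> (p1 - 2 * c1) / p2 \<and> \<delta>2 \<ge> (p2 - 2 * c2) / p1))"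
proof -
  have "\<beta> \<le> 1" "0 \<le> p1" "0 \<le> p2"
    using assms by simp_all
  then show ?thesis
    using assms grim_trigger_player1_iff[of p1 p2 \<beta> \<delta>1 c1]
      grim_trigger_player2_iff[of p1 p2 \<beta> \<delta>2 c2]
      tit_for_tat_player1_iff[of p2 \<delta>1 p1 c1] tit_for_tat_player2_iff[of p1 \<delta>2 p2 c2]
    by blast
qed

end
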